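(* Let $(\mathcal{C},f,m)$ be a Floer triple over a field $\mathbb{F}$. Then both chain complexes $\varinjlim_{b\to\infty}\varprojlim_{a\to-\infty}CM_a^b$ and $\varprojlim_{a\to-\infty}\varinjlim_{b\to\infty}CM_a^b$ are naturally isomorphic to the Novikov complex $(\Lambda,\partial)$, the canonical chain map $k$ between them is an isomorphism (hence so is $Hk$), and $H(\varinjlim_b\varprojlim_a CM)\cong H(\varprojlim_a\varinjlim_b CM)\cong HM$.
   Context: A Floer triple $(\mathcal{C},f,m)$ over a field $\mathbb{F}$: a set $\mathcal{C}$, $f\colon\mathcal{C}\to\mathbb{R}$, $m\colon\mathcal{C}\times\mathcal{C}\to\mathbb{F}$ with (i) $\mathcal{C}_a^b=\{c: a\le f(c)\le b\}$ finite for all $a\le b$; (ii) $m(c_1,c_2)\ne0\Rightarrow f(c_1)<f(c_2)$; (iii) $\sum_{c_2}m(c_1,c_2)m(c_2,c_3)=0$ for all $c_1,c_3$. $CM_a^b$ is the $\mathbb{F}$-vector space with basis $\mathcal{C}_a^b$ (zero if $a>b$), $\partial_a^b c=\sum_{c'\in\mathcal{C}_a^b}m(c',c)c'$. For $a_1\le a_2$, $p^b_{a_2,a_1}\colon CM^b_{a_1}\to CM^b_{a_2}$ sends $c\mapsto c$ if $f(c)\ge a_2$, else $0$; for $b_1\le b_2$, $i_a^{b_2,b_1}$ is the inclusion. The inverse limit over $a$ is taken with respect to the $p$'s (compatible families), the direct limit over $b$ with respect to the $i$'s. The canonical map $k\colon\varinjlim_b\varprojlim_a CM\to\varprojlim_a\varinjlim_b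 CM$ sends the class of $(x_a)_a\in\varprojlim_a CM_a^b$ to $(i_a^b x_a)_a$, with $i_a^b\colon CM_a^b\to\varinjlim_{b'}CM_a^{b'}$ canonical. The Novikov complex $\Lambda$ consists of formal sums $\sum_{c\in\mathcal{C}}\gamma_c c$, $\gamma_c\in\mathbb{F}$, with $\{c:\gamma_c\neq0, f(c)>b\}$ finite for all $b$, and $\partial\sum\gamma_cc=\sum_c\gamma_c\sum_{c'}m(c',c)c'$; $HM=H(\Lambda,\partial)$. *)

theory Defs
  imports Complex_Main
begin

record ('v, 'k) cx =
  car :: "'v set"
  zr  :: 'v
  ad  :: "'v \<Rightarrow> 'v \<Rightarrow> 'v"
  sm  :: "'k \<Rightarrow> 'v \<Rightarrow> 'v"
  dd  :: "'v \<Rightarrow> 'v"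

definition lin_iso :: "('v,'k) cx \<Rightarrow> ('w,'k) cx \<Rightarrow> ('v \<Rightarrow> 'w) \<Rightarrow> bool" where
  "lin_iso V W \<phi> \<longleftrightarrow> bij_betw \<phi> (car V) (car W)
     \<and> (\<forall>x\<in>car V. \<forall>y\<in>car V. \<phi> (ad V x y) = ad W (\<phi> x) (\<phi> y))
     \<and> (\<forall>s. \<forall>x\<in>car V. \<phi> (sm V s x) = sm W s (\<phi> x))"

definition chain_iso :: "('v,'k) cx \<Rightarrow> ('w,'k) cx \<Rightarrow> ('v \<Rightarrow> 'w) \<Rightarrow> bool" where
  "chain_iso V W \<phi> \<longleftrightarrow> lin_iso V W \<phi> \<and> (\<forall>x\<in>car V. \<phi> (dd V x) = dd W (\<phi> x))"

definition cycles :: "('v,'k) cx \<Rightarrow> 'v set" where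
  "cycles V = {z \<in> car V. dd V z = zr V}"

definition hcls :: "('v,'k) cx \<Rightarrow> 'v \<Rightarrow> 'v set" where
  "hcls V z = {ad V z y | y. y \<in> dd V ` car V}"

definition hom :: "('v,'k) cx \<Rightarrow> ('v set,'k) cx" where
  "hom V = \<lparr> car = {hcls V z | z. z \<in> cycles V},
             zr = hcls V (zr V),
             ad = (\<lambda>Z1 Z2. hcls V (ad V (SOME z. z \<in> Z1) (SOME z. z \<in> Z2))),
             sm = (\<lambda>s Z. hcls V (sm V s (SOME z. z \<in> Z))),
             dd = (\<lambda>Z. hcls V (zr V)) \<rparr>"

definition hmap :: "('v,'k) cx \<Rightarrow> ('w,'k) cx \<Rightarrow> ('v \<Rightarrow> 'w) \<Rightarrow> 'v set \<Rightarrow> 'w set" where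
  "hmap V W \<phi> Z = hcls W (\<phi> (SOME z. z \<in> Z))"

subsection \<open>Direct limits over b \<in> real (maps i b2 b1 for b1 \<le> b2)\<close>

definition dl_rel :: "(real \<Rightarrow> ('v,'k) cx) \<Rightarrow> (real \<Rightarrow> real \<Rightarrow> 'v \<Rightarrow> 'v)
     \<Rightarrow> real \<times> 'v \<Rightarrow> real \<times> 'v \<Rightarrow> bool" where
  "dl_rel V i p q \<longleftrightarrow> snd p \<in> car (V (fst p)) \<and> snd q \<in> car (V (fst q))
     \<and> (\<exists>b. fst p \<le> b \<and> fst q \<le> b \<and> i b (fst p) (snd p) = i b (fst q) (snd q))"

definition dl_cls :: "(real \<Rightarrow> ('v,'k) cx) \<Rightarrow> (real \<Rightarrow> real \<Rightarrow> 'v \<Rightarrow> 'v)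
     \<Rightarrow> real \<Rightarrow> 'v \<Rightarrow> (real \<times> 'v) set" where
  "dl_cls V i b x = {q. dl_rel V i (b, x) q}"

definition dl_rep :: "(real \<times> 'v) set \<Rightarrow> real \<times> 'v" where
  "dl_rep X = (SOME p. p \<in> X)"

definition dirlim :: "(real \<Rightarrow> ('v,'k) cx) \<Rightarrow> (real \<Rightarrow> real \<Rightarrow> 'v \<Rightarrow> 'v)
     \<Rightarrow> ((real \<times> 'v) set, 'k) cx" where
  "dirlim V i = \<lparr> car = {dl_cls V i b x | b x. x \<in> car (V b)},
     zr = dl_cls V i 0 (zr (V 0)),
     ad = (\<lambda>X Y. let b1 = fst (dl_rep X); x1 = snd (dl_rep X);
                     b2 = fst (dl_rep Y); x2 = snd (dl_rep Y); b = max b1 b2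
                 in dl_cls V i b (ad (V b) (i b b1 x1) (i b b2 x2))),
     sm = (\<lambda>s X. dl_cls V i (fst (dl_rep X)) (sm (V (fst (dl_rep X))) s (snd (dl_rep X)))),
     dd = (\<lambda>X. dl_cls V i (fst (dl_rep X)) (dd (V (fst (dl_rep X))) (snd (dl_rep X)))) \<rparr>"

definition dl_map :: "(real \<Rightarrow> ('w,'k) cx) \<Rightarrow> (real \<Rightarrow> real \<Rightarrow> 'w \<Rightarrow> 'w)
     \<Rightarrow> (real \<Rightarrow> 'v \<Rightarrow> 'w) \<Rightarrow> (real \<times> 'v) set \<Rightarrow> (real \<times> 'w) set" where
  "dl_map V' i' g X = dl_cls V' i' (fst (dl_rep X)) (g (fst (dl_rep X)) (snd (dl_rep X)))"

subsection \<open>Inverse limits over a \<in> real (maps p a2 a1 for a1 \<le> a2): compatible families\<close>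

definition invlim :: "(real \<Rightarrow> ('v,'k) cx) \<Rightarrow> (real \<Rightarrow> real \<Rightarrow> 'v \<Rightarrow> 'v)
     \<Rightarrow> (real \<Rightarrow> 'v, 'k) cx" where
  "invlim W p = \<lparr> car = {x. (\<forall>a. x a \<in> car (W a)) \<and> (\<forall>a1 a2. a1 \<le> a2 \<longrightarrow> p a2 a1 (x a1) = x a2)},
     zr = (\<lambda>a. zr (W a)),
     ad = (\<lambda>x y a. ad (W a) (x a) (y a)),
     sm = (\<lambda>s x a. sm (W a) s (x a)),
     dd = (\<lambda>x a. dd (W a) (x a)) \<rparr>"

definition floer_triple :: "'c set \<Rightarrow> ('c \<Rightarrow> real) \<Rightarrow> ('c \<Rightarrow> 'c \<Rightarrow> 'k::field) \<Rightarrow> bool" where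
  "floer_triple C f m \<longleftrightarrow>
     (\<forall>a b. a \<le> b \<longrightarrow> finite {c \<in> C. a \<le> f c \<and> f c \<le> b})
   \<and> (\<forall>c1\<in>C. \<forall>c2\<in>C. m c1 c2 \<noteq> 0 \<longrightarrow> f c1 < f c2)
   \<and> (\<forall>c1\<in>C. \<forall>c3\<in>C. (\<Sum>c2 \<in> {c2 \<in> C. m c1 c2 * m c2 c3 \<noteq> 0}. m c1 c2 * m c2 c3) = 0)"

text \<open>C_a^b, and CM_a^b as finitely supported coefficient functions on C_a^b.\<close>
definition Cab :: "'c set \<Rightarrow> ('c \<Rightarrow> real) \<Rightarrow> real \<Rightarrow> real \<Rightarrow> 'c set" where
  "Cab C f a b = {c \<in> C. a \<le> f c \<and> f c \<le> b}"

definition CM :: "'c set \<Rightarrow> ('c \<Rightarrow> real) \<Rightarrow> ('c \<Rightarrow> 'c \<Rightarrow> 'k::field) \<Rightarrow> real \<Rightarrow> real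
     \<Rightarrow> ('c \<Rightarrow> 'k, 'k) cx" where
  "CM C f m a b = \<lparr> car = {x. \<forall>c. x c \<noteq> 0 \<longrightarrow> c \<in> Cab C f a b},
     zr = (\<lambda>c. 0),
     ad = (\<lambda>x y c. x c + y c),
     sm = (\<lambda>s x c. s * x c),
     dd = (\<lambda>x c'. if c' \<in> Cab C f a b then (\<Sum>c \<in> Cab C f a b. m c' c * x c) else 0) \<rparr>"

text \<open>p^b_{a2,a1}: keep c iff f c \<ge> a2.  i_a^{b2,b1}: inclusion.\<close>
definition projp :: "('c \<Rightarrow> real) \<Rightarrow> real \<Rightarrow> real \<Rightarrow> ('c \<Rightarrow> 'k::zero) \<Rightarrow> 'c \<Rightarrow> 'k" where
  "projp f a2 a1 x = (\<lambda>c. if a2 \<le> f c then x c else 0)"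

definition incl :: "real \<Rightarrow> real \<Rightarrow> 'v \<Rightarrow> 'v" where
  "incl b2 b1 x = x"

definition DI :: "'c set \<Rightarrow> ('c \<Rightarrow> real) \<Rightarrow> ('c \<Rightarrow> 'c \<Rightarrow> 'k::field)
     \<Rightarrow> ((real \<times> (real \<Rightarrow> 'c \<Rightarrow> 'k)) set, 'k) cx" where
  "DI C f m = dirlim (\<lambda>b. invlim (\<lambda>a. CM C f m a b) (projp f))
                     (\<lambda>b2 b1 x a. incl b2 b1 (x a))"

definition ID :: "'c set \<Rightarrow> ('c \<Rightarrow> real) \<Rightarrow> ('c \<Rightarrow> 'c \<Rightarrow> 'k::field)
     \<Rightarrow> (real \<Rightarrow> (real \<times> ('c \<Rightarrow> 'k)) set, 'k) cx" where
  "ID C f m = invlim (\<lambda>a. dirlim (\<lambda>b. CM C f m a b) incl)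
                     (\<lambda>a2 a1. dl_map (\<lambda>b. CM C f m a2 b) incl (\<lambda>b. projp f a2 a1))"

definition kmap :: "'c set \<Rightarrow> ('c \<Rightarrow> real) \<Rightarrow> ('c \<Rightarrow> 'c \<Rightarrow> 'k::field)
     \<Rightarrow> (real \<times> (real \<Rightarrow> 'c \<Rightarrow> 'k)) set \<Rightarrow> real \<Rightarrow> (real \<times> ('c \<Rightarrow> 'k)) set" where
  "kmap C f m X = (\<lambda>a. dl_cls (\<lambda>b. CM C f m a b) incl (fst (dl_rep X)) (snd (dl_rep X) a))"

definition Nov :: "'c set \<Rightarrow> ('c \<Rightarrow> real) \<Rightarrow> ('c \<Rightarrow> 'c \<Rightarrow> 'k::field) \<Rightarrow> ('c \<Rightarrow> 'k, 'k) cx" where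
  "Nov C f m = \<lparr> car = {\<gamma>. (\<forall>c. \<gamma> c \<noteq> 0 \<longrightarrow> c \<in> C) \<and> (\<forall>b. finite {c. \<gamma> c \<noteq> 0 \<and> b < f c})},
     zr = (\<lambda>c. 0),
     ad = (\<lambda>x y c. x c + y c),
     sm = (\<lambda>s x c. s * x c),
     dd = (\<lambda>\<gamma> c'. if c' \<in> C then (\<Sum>c \<in> {c \<in> C. \<gamma> c \<noteq> 0 \<and> m c' c \<noteq> 0}. m c' c * \<gamma> c) else 0) \<rparr>"

definition nov_ID :: "('c \<Rightarrow> real) \<Rightarrow> (real \<Rightarrow> (real \<times> ('c \<Rightarrow> 'k)) set) \<Rightarrow> 'c \<Rightarrow> 'k" where
  "nov_ID f y = (\<lambda>c. snd (dl_rep (y (f c))) c)"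

definition nov_DI :: "('c \<Rightarrow> real) \<Rightarrow> (real \<times> (real \<Rightarrow> 'c \<Rightarrow> 'k)) set \<Rightarrow> 'c \<Rightarrow> 'k" where
  "nov_DI f X = (\<lambda>c. snd (dl_rep X) (f c) c)"

end

theory Submission
  imports Defs
begin

text \<open>
  Both limit complexes are identified with the Novikov complex Nov.  A Novikov chain
  \<gamma> is encoded by the family of its truncations trunc f \<gamma> a (the part of action \<ge> a):
  in lim_b lim_a CM as the class of this family at a level b bounding the action of \<gamma>,
  in lim_a lim_b CM as the family of classes of its members.  The key facts are that
  every element of either limit arises this way (a projection-compatible family is the
  truncation family of its diagonal, compatible_family_Nov), and that truncation commutes
  with the differentials because m is strictly upper triangular (CM_dd_trunc).
\<close>

section \<open>Laws of a complex and its homology\<close>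

locale lin_cx =
  fixes V :: "('v,'k) cx"
  assumes zr_car: "zr V \<in> car V"
  and ad_car: "\<lbrakk>x \<in> car V; y \<in> car V\<rbrakk> \<Longrightarrow> ad V x y \<in> car V"
  and sm_car: "x \<in> car V \<Longrightarrow> sm V s x \<in> car V"
  and dd_car: "x \<in> car V \<Longrightarrow> dd V x \<in> car V"
  and ad_assoc: "\<lbrakk>x\<in>car V; y\<in>car V; z\<in>car V\<rbrakk> \<Longrightarrow> ad V (ad V x y) z = ad V x (ad V y z)"
  and ad_comm: "\<lbrakk>x\<in>car V; y\<in>car V\<rbrakk> \<Longrightarrow> ad V x y = ad V y x"
  and ad_zr: "x \<in> car V \<Longrightarrow> ad V (zr V) x = x"
  and ad_inv: "x \<in> car V \<Longrightarrow> \<exists>y\<in>car V. ad V x y = zr V"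
  and dd_ad: "\<lbrakk>x\<in>car V; y\<in>car V\<rbrakk> \<Longrightarrow> dd V (ad V x y) = ad V (dd V x) (dd V y)"
  and sm_ad: "\<lbrakk>x\<in>car V; y\<in>car V\<rbrakk> \<Longrightarrow> sm V s (ad V x y) = ad V (sm V s x) (sm V s y)"
  and dd_sm: "x\<in>car V \<Longrightarrow> dd V (sm V s x) = sm V s (dd V x)"
begin

lemma ad_zr_r: "x\<in>car V \<Longrightarrow> ad V x (zr V) = x"
  using ad_comm[of x "zr V"] ad_zr[of x] zr_car by simp

lemma ad_lcomm: "\<lbrakk>x\<in>car V; y\<in>car V; z\<in>car V\<rbrakk> \<Longrightarrow> ad V x (ad V y z) = ad V y (ad V x z)"
proof -
  assume a: "x\<in>car V" "y\<in>car V" "z\<in>car V"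
  have "ad V x (ad V y z) = ad V (ad V x y) z" using a ad_assoc by simp
  also have "\<dots> = ad V (ad V y x) z" using a ad_comm[of x y] by simp
  also have "\<dots> = ad V y (ad V x z)" using a ad_assoc by simp
  finally show ?thesis .
qed

lemma cancel:
  assumes "a\<in>car V" "b\<in>car V" "c\<in>car V" "ad V a b = ad V a c" shows "b = c"
proof -
  obtain a' where a': "a'\<in>car V" "ad V a a' = zr V" using ad_inv assms(1) by blast
  have "b = ad V (ad V a' a) b" using a' assms ad_comm[of a' a] ad_zr by simp
  also have "\<dots> = ad V a' (ad V a b)" using a' assms ad_assoc by simp
  also have "\<dots> = ad V a' (ad V a c)" using assms by simp
  also have "\<dots> = ad V (ad V a' a) c" using a' assms ad_assoc by simp
  also have "\<dots> = c" using a' assms ad_comm[of a' a] ad_zr by simp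
  finally show ?thesis .
qed

lemma dd_zr: "dd V (zr V) = zr V"
proof -
  have "ad V (dd V (zr V)) (zr V) = ad V (dd V (zr V)) (dd V (zr V))"
    using ad_zr_r[OF dd_car[OF zr_car]] dd_ad[OF zr_car zr_car] ad_zr[OF zr_car] by simp
  then have "zr V = dd V (zr V)" by (rule cancel[OF dd_car[OF zr_car] zr_car dd_car[OF zr_car]])
  then show ?thesis by simp
qed

text \<open>Homology classes are cosets of the boundaries; these lemmas show that the
  operations of hom V are well defined on them.\<close>
lemma hcls_self: "z\<in>car V \<Longrightarrow> z \<in> hcls V z"
proof -
  assume z: "z\<in>car V"
  have "z = ad V z (dd V (zr V))" using dd_zr ad_zr_r z by simp
  then show ?thesis unfolding hcls_def using zr_car by blast
qed

lemma hcls_shift: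
  assumes z: "z\<in>car V" and u: "u\<in>car V"
  shows "hcls V (ad V z (dd V u)) = hcls V z"
proof
  show "hcls V (ad V z (dd V u)) \<subseteq> hcls V z"
  proof
    fix w assume "w \<in> hcls V (ad V z (dd V u))"
    then obtain y where y: "y\<in>car V" "w = ad V (ad V z (dd V u)) (dd V y)"
      unfolding hcls_def by auto
    then have "w = ad V z (dd V (ad V u y))"
      using z u ad_assoc dd_car dd_ad by simp
    then show "w \<in> hcls V z" unfolding hcls_def using u y ad_car by blast
  qed
next
  show "hcls V z \<subseteq> hcls V (ad V z (dd V u))"
  proof
    fix w assume "w \<in> hcls V z"
    then obtain y where y: "y\<in>car V" "w = ad V z (dd V y)"
      unfolding hcls_def by auto
    obtain u' where u': "u'\<in>car V" "ad V u u' = zr V" using ad_inv u by blast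
    have "ad V (dd V u) (ad V (dd V y) (dd V u')) = ad V (dd V y) (ad V (dd V u) (dd V u'))"
      using u u' y dd_car ad_lcomm by blast
    also have "\<dots> = ad V (dd V y) (dd V (ad V u u'))" using u u' dd_ad[of u u'] by simp
    also have "\<dots> = dd V y" using u' dd_zr ad_zr_r dd_car y by simp
    finally have du_cancel: "ad V (dd V u) (ad V (dd V y) (dd V u')) = dd V y" .
    have "ad V (ad V z (dd V u)) (dd V (ad V y u')) = ad V z (ad V (dd V u) (dd V (ad V y u')))"
      using y u u' z ad_assoc dd_car ad_car by simp
    also have "\<dots> = ad V z (ad V (dd V u) (ad V (dd V y) (dd V u')))"
      using y u' dd_ad[of y u'] by simp
    finally have "ad V (ad V z (dd V u)) (dd V (ad V y u')) = ad V z (ad V (dd V u) (ad V (dd V y) (dd V u')))" .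
    then have "w = ad V (ad V z (dd V u)) (dd V (ad V y u'))"
      using du_cancel y by simp
    then show "w \<in> hcls V (ad V z (dd V u))" unfolding hcls_def using u' y ad_car by blast
  qed
qed

lemma hcls_eq:
  assumes "z1\<in>car V" "hcls V z1 = hcls V z2"
  shows "\<exists>u\<in>car V. z1 = ad V z2 (dd V u)"
  using hcls_self[OF assms(1)] assms(2) unfolding hcls_def by auto

lemma rep_hcls:
  assumes "z\<in>car V" shows "\<exists>u\<in>car V. (SOME w. w \<in> hcls V z) = ad V z (dd V u)"
proof -
  have "(SOME w. w \<in> hcls V z) \<in> hcls V z" using hcls_self[OF assms] by (rule someI)
  then show ?thesis unfolding hcls_def by auto
qed

lemma hom_ad:
  assumes z1: "z1\<in>car V" and z2: "z2\<in>car V"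
  shows "ad (hom V) (hcls V z1) (hcls V z2) = hcls V (ad V z1 z2)"
proof -
  obtain u1 where u1: "u1\<in>car V" "(SOME w. w \<in> hcls V z1) = ad V z1 (dd V u1)" using rep_hcls z1 by blast
  obtain u2 where u2: "u2\<in>car V" "(SOME w. w \<in> hcls V z2) = ad V z2 (dd V u2)" using rep_hcls z2 by blast
  have d1: "dd V u1 \<in> car V" "dd V u2 \<in> car V" using u1 u2 dd_car by auto
  have "ad V (ad V z1 (dd V u1)) (ad V z2 (dd V u2)) = ad V z1 (ad V (dd V u1) (ad V z2 (dd V u2)))"
    using z1 z2 d1 ad_car ad_assoc by simp
  also have "\<dots> = ad V z1 (ad V z2 (ad V (dd V u1) (dd V u2)))"
    using z1 z2 d1 ad_lcomm[of "dd V u1" z2 "dd V u2"] by simp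
  also have "\<dots> = ad V (ad V z1 z2) (ad V (dd V u1) (dd V u2))"
    using z1 z2 d1 ad_car ad_assoc by simp
  also have "\<dots> = ad V (ad V z1 z2) (dd V (ad V u1 u2))"
    using u1 u2 dd_ad[of u1 u2] by simp
  finally have "ad V (ad V z1 (dd V u1)) (ad V z2 (dd V u2)) = ad V (ad V z1 z2) (dd V (ad V u1 u2))" .
  then show ?thesis using u1 u2 hcls_shift z1 z2 ad_car by (simp add: hom_def)
qed

lemma hom_sm:
  assumes z: "z\<in>car V"
  shows "sm (hom V) s (hcls V z) = hcls V (sm V s z)"
proof -
  obtain u where u: "u\<in>car V" "(SOME w. w \<in> hcls V z) = ad V z (dd V u)" using rep_hcls z by blast
  have "sm V s (ad V z (dd V u)) = ad V (sm V s z) (dd V (sm V s u))"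
    using z u dd_car sm_ad dd_sm by simp
  then show ?thesis using u hcls_shift z sm_car by (simp add: hom_def)
qed

end

section \<open>Chain isomorphisms induce isomorphisms in homology\<close>

locale cx_isomorphism = V: lin_cx V + W: lin_cx W
  for V :: "('v,'k) cx" and W :: "('w,'k) cx" +
  fixes \<phi> :: "'v \<Rightarrow> 'w"
  assumes iso: "chain_iso V W \<phi>"
begin

lemma phi_inj: "inj_on \<phi> (car V)" and phi_image: "\<phi> ` car V = car W"
  using iso by (auto simp: chain_iso_def lin_iso_def bij_betw_def)

lemma phi_car: "x \<in> car V \<Longrightarrow> \<phi> x \<in> car W"
  using phi_image by auto

lemma phi_ad: "\<lbrakk>x \<in> car V; y \<in> car V\<rbrakk> \<Longrightarrow> \<phi> (ad V x y) = ad W (\<phi> x) (\<phi> y)"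
  and phi_sm: "x \<in> car V \<Longrightarrow> \<phi> (sm V s x) = sm W s (\<phi> x)"
  and phi_dd: "x \<in> car V \<Longrightarrow> \<phi> (dd V x) = dd W (\<phi> x)"
  using iso by (auto simp: chain_iso_def lin_iso_def)

lemma phi_zr: "\<phi> (zr V) = zr W"
proof -
  have "ad W (\<phi> (zr V)) (\<phi> (zr V)) = ad W (\<phi> (zr V)) (zr W)"
    using phi_ad[OF V.zr_car V.zr_car] V.ad_zr[OF V.zr_car] W.ad_zr_r phi_car V.zr_car by simp
  then show ?thesis using W.cancel phi_car V.zr_car W.zr_car by metis
qed

lemma hmap_hcls: "z \<in> car V \<Longrightarrow> hmap V W \<phi> (hcls V z) = hcls W (\<phi> z)"
proof -
  assume z: "z \<in> car V"
  obtain u where u: "u \<in> car V" "(SOME w. w \<in> hcls V z) = ad V z (dd V u)"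
    using V.rep_hcls z by blast
  have "\<phi> (ad V z (dd V u)) = ad W (\<phi> z) (dd W (\<phi> u))"
    using phi_ad phi_dd z u V.dd_car by simp
  then show ?thesis unfolding hmap_def using u W.hcls_shift phi_car z by simp
qed

lemma phi_cycles: "z \<in> car V \<Longrightarrow> \<phi> z \<in> cycles W \<longleftrightarrow> z \<in> cycles V"
proof -
  assume z: "z \<in> car V"
  have "dd W (\<phi> z) = zr W \<longleftrightarrow> \<phi> (dd V z) = \<phi> (zr V)" using phi_dd[OF z] phi_zr by simp
  also have "\<dots> \<longleftrightarrow> dd V z = zr V"
    using inj_on_eq_iff[OF phi_inj V.dd_car[OF z] V.zr_car] .
  finally show ?thesis using z phi_car by (simp add: cycles_def)
qed

lemma hom_car: "car (hom V) = hcls V ` cycles V" and hom_car_W: "car (hom W) = hcls W ` cycles W"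
  by (auto simp: hom_def)

lemma hmap_inj: "inj_on (hmap V W \<phi>) (car (hom V))"
proof (rule inj_onI)
  fix Z1 Z2 assume "Z1 \<in> car (hom V)" "Z2 \<in> car (hom V)" and eq: "hmap V W \<phi> Z1 = hmap V W \<phi> Z2"
  then obtain z1 z2 where z: "z1 \<in> cycles V" "z2 \<in> cycles V" "Z1 = hcls V z1" "Z2 = hcls V z2"
    using hom_car by auto
  have zc: "z1 \<in> car V" "z2 \<in> car V" using z by (auto simp: cycles_def)
  have "hcls W (\<phi> z1) = hcls W (\<phi> z2)" using eq z zc hmap_hcls by simp
  then obtain w where w: "w \<in> car W" "\<phi> z1 = ad W (\<phi> z2) (dd W w)"
    using W.hcls_eq[OF phi_car[OF zc(1)]] by blast
  obtain u where u: "u \<in> car V" "w = \<phi> u" using w phi_image by auto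
  have "\<phi> z1 = \<phi> (ad V z2 (dd V u))" using w u zc phi_ad phi_dd V.dd_car by simp
  then have "z1 = ad V z2 (dd V u)"
    using inj_onD[OF phi_inj] zc V.ad_car V.dd_car u by blast
  then show "Z1 = Z2" using z zc V.hcls_shift u by simp
qed

lemma hmap_image: "hmap V W \<phi> ` car (hom V) = car (hom W)"
proof
  show "hmap V W \<phi> ` car (hom V) \<subseteq> car (hom W)"
    using hom_car hom_car_W hmap_hcls phi_cycles by (auto simp: cycles_def)
next
  show "car (hom W) \<subseteq> hmap V W \<phi> ` car (hom V)"
  proof
    fix Z assume "Z \<in> car (hom W)"
    then obtain w where w: "w \<in> cycles W" "Z = hcls W w" using hom_car_W by auto
    then obtain z where z: "z \<in> car V" "w = \<phi> z" using phi_image by (auto simp: cycles_def)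
    then have "hcls V z \<in> car (hom V)" using phi_cycles w hom_car by simp
    moreover have "Z = hmap V W \<phi> (hcls V z)" using hmap_hcls z w by simp
    ultimately show "Z \<in> hmap V W \<phi> ` car (hom V)" by blast
  qed
qed

lemma hom_lin_iso: "lin_iso (hom V) (hom W) (hmap V W \<phi>)"
  unfolding lin_iso_def bij_betw_def
proof (intro conjI ballI allI hmap_inj hmap_image)
  fix X Y assume "X \<in> car (hom V)" "Y \<in> car (hom V)"
  then obtain x y where "x \<in> cycles V" "y \<in> cycles V" "X = hcls V x" "Y = hcls V y"
    using hom_car by auto
  then show "hmap V W \<phi> (ad (hom V) X Y) = ad (hom W) (hmap V W \<phi> X) (hmap V W \<phi> Y)"
    using V.hom_ad W.hom_ad hmap_hcls phi_ad V.ad_car phi_car by (simp add: cycles_def)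
next
  fix s X assume "X \<in> car (hom V)"
  then obtain x where "x \<in> cycles V" "X = hcls V x" using hom_car by auto
  then show "hmap V W \<phi> (sm (hom V) s X) = sm (hom W) s (hmap V W \<phi> X)"
    using V.hom_sm W.hom_sm hmap_hcls phi_sm V.sm_car phi_car by (simp add: cycles_def)
qed

end

lemma chain_iso_hom:
  assumes "lin_cx V" and "lin_cx W" and "chain_iso V W \<phi>"
  shows "lin_iso (hom V) (hom W) (hmap V W \<phi>)"
proof -
  interpret cx_isomorphism V W \<phi> using assms by (simp add: cx_isomorphism_def cx_isomorphism_axioms_def)
  show ?thesis by (rule hom_lin_iso)
qed

section \<open>Parametrized complexes\<close>

text \<open>All complexes of the main theorem
  are parametrized by the Novikov complex.\<close>

definition cx_param :: "('v,'k) cx \<Rightarrow> ('w,'k) cx \<Rightarrow> ('v \<Rightarrow> 'w) \<Rightarrow> bool" where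
  "cx_param N V R \<longleftrightarrow> car V = R ` car N
     \<and> (\<forall>x\<in>car N. \<forall>y\<in>car N. ad V (R x) (R y) = R (ad N x y))
     \<and> (\<forall>s. \<forall>x\<in>car N. sm V s (R x) = R (sm N s x))
     \<and> (\<forall>x\<in>car N. dd V (R x) = R (dd N x))"

lemma cx_param_id: "cx_param N N id"
  by (simp add: cx_param_def)

lemma lin_cx_param:
  assumes N: "lin_cx N" and R: "cx_param N V R" and z: "zr V = R (zr N)"
  shows "lin_cx V"
proof -
  interpret N: lin_cx N by (rule N)
  have cV: "car V = R ` car N"
    and a: "\<And>x y. x\<in>car N \<Longrightarrow> y\<in>car N \<Longrightarrow> ad V (R x) (R y) = R (ad N x y)"
    and s: "\<And>s x. x\<in>car N \<Longrightarrow> sm V s (R x) = R (sm N s x)"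
    and d: "\<And>x. x\<in>car N \<Longrightarrow> dd V (R x) = R (dd N x)"
    using R by (auto simp: cx_param_def)
  show ?thesis
  proof (unfold_locales, unfold cV)
    show "zr V \<in> R ` car N" using z N.zr_car by simp
  next
    fix x y assume "x \<in> R ` car N" "y \<in> R ` car N" then show "ad V x y \<in> R ` car N"
      using a N.ad_car by auto
  next
    fix s x assume "x \<in> R ` car N" then show "sm V s x \<in> R ` car N"
      using s N.sm_car by auto
  next
    fix x assume "x \<in> R ` car N" then show "dd V x \<in> R ` car N"
      using d N.dd_car by auto
  next
    fix x y w assume "x \<in> R ` car N" "y \<in> R ` car N" "w \<in> R ` car N"
    then show "ad V (ad V x y) w = ad V x (ad V y w)"
      using a N.ad_car N.ad_assoc by auto
  next
    fix x y assume "x \<in> R ` car N" "y \<in> R ` car N" then show "ad V x y = ad V y x"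
      using a N.ad_comm by auto
  next
    fix x assume "x \<in> R ` car N" then show "ad V (zr V) x = x"
      using a N.ad_zr z N.zr_car by auto
  next
    fix x assume "x \<in> R ` car N"
    then obtain x' where x': "x'\<in>car N" "x = R x'" by auto
    obtain y where y: "y\<in>car N" "ad N x' y = zr N" using N.ad_inv x' by blast
    have "ad V x (R y) = zr V" using x' y a z by simp
    then show "\<exists>y\<in>R ` car N. ad V x y = zr V" using y by blast
  next
    fix x y assume "x \<in> R ` car N" "y \<in> R ` car N"
    then show "dd V (ad V x y) = ad V (dd V x) (dd V y)"
      using a d N.ad_car N.dd_car N.dd_ad by auto
  next
    fix s x y assume "x \<in> R ` car N" "y \<in> R ` car N"
    then show "sm V s (ad V x y) = ad V (sm V s x) (sm V s y)"
      using a s N.ad_car N.sm_car N.sm_ad by auto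
  next
    fix s x assume "x \<in> R ` car N"
    then show "dd V (sm V s x) = sm V s (dd V x)"
      using s d N.sm_car N.dd_car N.dd_sm by auto
  qed
qed

lemma chain_iso_param:
  assumes N: "lin_cx N" and R1: "cx_param N V1 R1" and R2: "cx_param N V2 R2"
    and inj2: "inj_on R2 (car N)" and k: "\<And>x. x\<in>car N \<Longrightarrow> \<kappa> (R1 x) = R2 x"
  shows "chain_iso V1 V2 \<kappa>"
proof -
  interpret N: lin_cx N by (rule N)
  have c1: "car V1 = R1 ` car N" and c2: "car V2 = R2 ` car N"
    and a: "\<And>x y. x\<in>car N \<Longrightarrow> y\<in>car N \<Longrightarrow> ad V1 (R1 x) (R1 y) = R1 (ad N x y)
                                              \<and> ad V2 (R2 x) (R2 y) = R2 (ad N x y)"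
    and s: "\<And>s x. x\<in>car N \<Longrightarrow> sm V1 s (R1 x) = R1 (sm N s x) \<and> sm V2 s (R2 x) = R2 (sm N s x)"
    and d: "\<And>x. x\<in>car N \<Longrightarrow> dd V1 (R1 x) = R1 (dd N x) \<and> dd V2 (R2 x) = R2 (dd N x)"
    using R1 R2 by (auto simp: cx_param_def)
  have inj: "inj_on \<kappa> (car V1)"
  proof (rule inj_onI)
    fix x y assume "x \<in> car V1" "y \<in> car V1" "\<kappa> x = \<kappa> y"
    then obtain x' y' where "x'\<in>car N" "y'\<in>car N" "x = R1 x'" "y = R1 y'" "R2 x' = R2 y'"
      using c1 k by auto
    then show "x = y" using inj_onD[OF inj2] by metis
  qed
  have img: "\<kappa> ` car V1 = car V2"
  proof -
    have "\<kappa> ` car V1 = (\<kappa> \<circ> R1) ` car N" using c1 by (simp add: image_comp)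
    also have "\<dots> = R2 ` car N" using k by (simp cong: image_cong)
    finally show ?thesis using c2 by simp
  qed
  have hom: "\<forall>x\<in>car V1. \<forall>y\<in>car V1. \<kappa> (ad V1 x y) = ad V2 (\<kappa> x) (\<kappa> y)"
    "\<forall>s. \<forall>x\<in>car V1. \<kappa> (sm V1 s x) = sm V2 s (\<kappa> x)"
    "\<forall>x\<in>car V1. \<kappa> (dd V1 x) = dd V2 (\<kappa> x)"
    unfolding c1 using k a s d N.ad_car N.sm_car N.dd_car by simp_all
  show ?thesis unfolding chain_iso_def lin_iso_def bij_betw_def using inj img hom by blast
qed

section \<open>Directed unions\<close>

text \<open>For a system V indexed by b whose structure maps are inclusions, the class of x in
  the direct limit is the set ucls V x of all levels containing x, paired with x.\<close>
definition ucls :: "(real \<Rightarrow> ('v,'k) cx) \<Rightarrow> 'v \<Rightarrow> (real \<times> 'v) set" where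
  "ucls V x = {q. snd q = x \<and> x \<in> car (V (fst q))}"

lemma dl_cls_incl:
  fixes V :: "real \<Rightarrow> ('v,'k) cx"
  assumes "x \<in> car (V b)" shows "dl_cls V (\<lambda>_ _ x. x) b x = ucls V x"
proof (rule set_eqI)
  fix q :: "real \<times> 'v"
  have "\<exists>b'. b \<le> b' \<and> fst q \<le> b'" by (rule exI[where x="max b (fst q)"]) simp
  then show "q \<in> dl_cls V (\<lambda>_ _ x. x) b x \<longleftrightarrow> q \<in> ucls V x"
    using assms unfolding dl_cls_def dl_rel_def ucls_def by auto
qed

lemma ucls_mem: "x \<in> car (V b) \<Longrightarrow> (b, x) \<in> ucls V x"
  by (simp add: ucls_def)

lemma ucls_rep:
  assumes "x \<in> car (V b)"
  shows "snd (dl_rep (ucls V x)) = x \<and> x \<in> car (V (fst (dl_rep (ucls V x))))"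
proof -
  have "dl_rep (ucls V x) \<in> ucls V x"
    unfolding dl_rep_def by (rule someI[where P="\<lambda>p. p \<in> ucls V x", OF ucls_mem[where V=V, OF assms]])
  then show ?thesis by (simp add: ucls_def)
qed

lemma ucls_inj: "x \<in> car (V b) \<Longrightarrow> ucls V x = ucls V y \<Longrightarrow> x = y"
  using ucls_mem[of x V b] by (simp add: ucls_def)

lemma dirlim_car: "car (dirlim V (\<lambda>_ _ x. x)) = {ucls V x | b x. x \<in> car (V b)}"
  unfolding dirlim_def by (auto simp: dl_cls_incl) (blast, metis dl_cls_incl)

lemma dirlim_ad:
  assumes x: "x \<in> car (V b1)" and y: "y \<in> car (V b2)"
  and mono: "\<And>b b' z. b \<le> b' \<Longrightarrow> z \<in> car (V b) \<Longrightarrow> z \<in> car (V b')"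
  and op: "\<And>b. x \<in> car (V b) \<Longrightarrow> y \<in> car (V b) \<Longrightarrow> ad (V b) x y = A \<and> A \<in> car (V b)"
  shows "ad (dirlim V (\<lambda>_ _ x. x)) (ucls V x) (ucls V y) = ucls V A"
proof -
  define p1 where "p1 = dl_rep (ucls V x)"
  define p2 where "p2 = dl_rep (ucls V y)"
  have rx: "snd p1 = x" "x \<in> car (V (fst p1))" using ucls_rep[where V=V and b=b1, OF x] p1_def by auto
  have ry: "snd p2 = y" "y \<in> car (V (fst p2))" using ucls_rep[where V=V and b=b2, OF y] p2_def by auto
  define b where "b = max (fst p1) (fst p2)"
  have xb: "x \<in> car (V b)" using mono[of "fst p1" b] rx b_def by simp
  have yb: "y \<in> car (V b)" using mono[of "fst p2" b] ry b_def by simp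
  have "ad (dirlim V (\<lambda>_ _ x. x)) (ucls V x) (ucls V y) = dl_cls V (\<lambda>_ _ x. x) b (ad (V b) x y)"
    by (simp add: dirlim_def Let_def p1_def[symmetric] p2_def[symmetric] b_def rx ry)
  also have "\<dots> = ucls V A" using op[OF xb yb] dl_cls_incl[where V=V and b=b] by simp
  finally show ?thesis .
qed

lemma dirlim_sm:
  assumes x: "x \<in> car (V b0)"
  and op: "\<And>b. x \<in> car (V b) \<Longrightarrow> sm (V b) s x = A \<and> A \<in> car (V b)"
  shows "sm (dirlim V (\<lambda>_ _ x. x)) s (ucls V x) = ucls V A"
proof -
  define p1 where "p1 = dl_rep (ucls V x)"
  have rx: "snd p1 = x" "x \<in> car (V (fst p1))" using ucls_rep[where V=V and b=b0, OF x] p1_def by auto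
  have "sm (dirlim V (\<lambda>_ _ x. x)) s (ucls V x) = dl_cls V (\<lambda>_ _ x. x) (fst p1) (sm (V (fst p1)) s x)"
    by (simp add: dirlim_def p1_def[symmetric] rx)
  also have "\<dots> = ucls V A" using op[OF rx(2)] dl_cls_incl[where V=V and b="fst p1"] by simp
  finally show ?thesis .
qed

lemma dirlim_dd:
  assumes x: "x \<in> car (V b0)"
  and op: "\<And>b. x \<in> car (V b) \<Longrightarrow> dd (V b) x = A \<and> A \<in> car (V b)"
  shows "dd (dirlim V (\<lambda>_ _ x. x)) (ucls V x) = ucls V A"
proof -
  define p1 where "p1 = dl_rep (ucls V x)"
  have rx: "snd p1 = x" "x \<in> car (V (fst p1))" using ucls_rep[where V=V and b=b0, OF x] p1_def by auto
  have "dd (dirlim V (\<lambda>_ _ x. x)) (ucls V x) = dl_cls V (\<lambda>_ _ x. x) (fst p1) (dd (V (fst p1)) x)"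
    by (simp add: dirlim_def p1_def[symmetric] rx)
  also have "\<dots> = ucls V A" using op[OF rx(2)] dl_cls_incl[where V=V and b="fst p1"] by simp
  finally show ?thesis .
qed

lemma dirlim_zr:
  assumes "zr (V 0) \<in> car (V 0)"
  shows "zr (dirlim V (\<lambda>_ _ x. x)) = ucls V (zr (V 0))"
  using dl_cls_incl[where V=V and b=0, OF assms] by (simp add: dirlim_def)

section \<open>The complexes CM and the Novikov complex\<close>

lemma floer_triangular:
  assumes "floer_triple C f m" "c1 \<in> C" "c2 \<in> C" "m c1 c2 \<noteq> 0"
  shows "f c1 < f c2"
  using assms by (simp add: floer_triple_def)

lemma Cab_fin:
  assumes "floer_triple C f m" shows "finite (Cab C f a b)"
proof (cases "a \<le> b")
  case True then show ?thesis using assms by (simp add: floer_triple_def Cab_def)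
next
  case False then have "Cab C f a b = {}" by (auto simp: Cab_def)
  then show ?thesis by simp
qed

lemma CM_car: "x \<in> car (CM C f m a b) \<longleftrightarrow> (\<forall>c. x c \<noteq> 0 \<longrightarrow> c \<in> C \<and> a \<le> f c \<and> f c \<le> b)"
  by (simp add: CM_def Cab_def)

lemma CM_mono: "b \<le> b' \<Longrightarrow> x \<in> car (CM C f m a b) \<Longrightarrow> x \<in> car (CM C f m a b')"
  unfolding CM_car by force

lemma CM_dd: "dd (CM C f m a b) x c' = (if c' \<in> Cab C f a b then \<Sum>c\<in>Cab C f a b. m c' c * x c else 0)"
  by (simp add: CM_def)

lemma CM_dd_car: "dd (CM C f m a b) x \<in> car (CM C f m a b)"
  by (simp add: CM_def)

lemma Nov_car: "\<gamma> \<in> car (Nov C f m) \<longleftrightarrow> (\<forall>c. \<gamma> c \<noteq> 0 \<longrightarrow> c \<in> C) \<and> (\<forall>b. finite {c. \<gamma> c \<noteq> 0 \<and> b < f c})"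
  by (simp add: Nov_def)

lemma Nov_ops:
  "ad (Nov C f m) x y = (\<lambda>c. x c + y c)" "sm (Nov C f m) s x = (\<lambda>c. s * x c)"
  "zr (Nov C f m) = (\<lambda>c. 0)"
  by (simp_all add: Nov_def)

text \<open>A Novikov chain has only finitely many terms above any level a, hence bounded action there.\<close>
lemma Nov_bound:
  assumes "\<gamma> \<in> car (Nov C f m)" shows "\<exists>b. \<forall>c. \<gamma> c \<noteq> 0 \<longrightarrow> a \<le> f c \<longrightarrow> f c \<le> b"
proof -
  define F where "F = {c. \<gamma> c \<noteq> 0 \<and> a - 1 < f c}"
  have fin: "finite F" using assms unfolding F_def Nov_car by blast
  have "\<forall>c. \<gamma> c \<noteq> 0 \<longrightarrow> a \<le> f c \<longrightarrow> f c \<le> Max (insert a (f ` F))"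
  proof (intro allI impI)
    fix c assume "\<gamma> c \<noteq> 0" "a \<le> f c"
    then have "c \<in> F" unfolding F_def by simp
    then show "f c \<le> Max (insert a (f ` F))" using fin by (intro Max_ge) auto
  qed
  then show ?thesis by blast
qed

lemma Nov_bound_above:
  assumes "\<gamma> \<in> car (Nov C f m)" shows "\<exists>b. \<forall>c. \<gamma> c \<noteq> 0 \<longrightarrow> f c \<le> b"
proof -
  obtain b where b: "\<forall>c. \<gamma> c \<noteq> 0 \<longrightarrow> 0 \<le> f c \<longrightarrow> f c \<le> b" using Nov_bound[OF assms] by blast
  then have "\<forall>c. \<gamma> c \<noteq> 0 \<longrightarrow> f c \<le> max b 0" by force
  then show ?thesis by blast
qed

text \<open>The truncation of a chain to the part of action at least a; the Novikov chain
  \<gamma> corresponds to the family of its truncations.\<close>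
definition trunc :: "('c \<Rightarrow> real) \<Rightarrow> ('c \<Rightarrow> 'k::zero) \<Rightarrow> real \<Rightarrow> 'c \<Rightarrow> 'k" where
  "trunc f \<gamma> a = (\<lambda>c. if a \<le> f c then \<gamma> c else 0)"

lemma trunc_zero: "trunc f (\<lambda>c. 0) a = (\<lambda>c. 0)"
  by (simp add: trunc_def)

lemma projp_trunc: "a1 \<le> a2 \<Longrightarrow> projp f a2 a1 (trunc f \<gamma> a1) = trunc f \<gamma> a2"
  by (auto simp: projp_def trunc_def fun_eq_iff)

lemma CM_trunc_car:
  "trunc f \<gamma> a \<in> car (CM C f m a b) \<longleftrightarrow> (\<forall>c. \<gamma> c \<noteq> 0 \<longrightarrow> a \<le> f c \<longrightarrow> c \<in> C \<and> f c \<le> b)"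
  by (auto simp: CM_car trunc_def)

lemma Nov_CM:
  assumes "\<gamma> \<in> car (Nov C f m)" shows "\<exists>b. trunc f \<gamma> a \<in> car (CM C f m a b)"
proof -
  obtain b where "\<forall>c. \<gamma> c \<noteq> 0 \<longrightarrow> a \<le> f c \<longrightarrow> f c \<le> b" using Nov_bound[OF assms] by blast
  then have "trunc f \<gamma> a \<in> car (CM C f m a b)" using assms by (simp add: CM_trunc_car Nov_car)
  then show ?thesis by blast
qed

text \<open>Conversely, a projection-compatible family of elements of the CM_a^B(a) is the
  family of truncations of a Novikov chain, namely of its diagonal c \<mapsto> x (f c) c.\<close>
lemma compatible_family_Nov:
  assumes fl: "floer_triple C f m"
    and x_car: "\<And>a. x a \<in> car (CM C f m a (B a))"
    and comp: "\<And>a1 a2. a1 \<le> a2 \<Longrightarrow> projp f a2 a1 (x a1) = x a2"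
  shows "\<exists>\<gamma>\<in>car (Nov C f m). x = trunc f \<gamma>"
proof
  show x_eq: "x = trunc f (\<lambda>c. x (f c) c)"
  proof (intro ext)
    fix a c
    show "x a c = trunc f (\<lambda>c. x (f c) c) a c"
    proof (cases "a \<le> f c")
      case True
      then have "projp f (f c) a (x a) c = x (f c) c" using comp by simp
      then show ?thesis using True by (simp add: projp_def trunc_def)
    next
      case False
      then show ?thesis using x_car[of a] by (auto simp: CM_car trunc_def)
    qed
  qed
  have supp: "\<forall>c. x (f c) c \<noteq> 0 \<longrightarrow> c \<in> C" using x_car by (auto simp: CM_car)
  have "{c. x (f c) c \<noteq> 0 \<and> b < f c} \<subseteq> Cab C f b (B b)" for b
  proof
    fix c assume c: "c \<in> {c. x (f c) c \<noteq> 0 \<and> b < f c}"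
    then have "x b c \<noteq> 0" using fun_cong[OF fun_cong[OF x_eq, of b], of c] by (simp add: trunc_def)
    then show "c \<in> Cab C f b (B b)" using x_car[of b] by (auto simp: CM_car Cab_def)
  qed
  then have "finite {c. x (f c) c \<noteq> 0 \<and> b < f c}" for b
    using Cab_fin[OF fl] by (rule finite_subset)
  then show "(\<lambda>c. x (f c) c) \<in> car (Nov C f m)" using supp by (simp add: Nov_car)
qed

text \<open>By triangularity, the differential of CM_a^b at c' only sees generators of action
  at least f c'.\<close>
lemma Cab_sum_from:
  assumes fl: "floer_triple C f m" and c': "c' \<in> C" "a \<le> f c'"
  shows "(\<Sum>c\<in>Cab C f a b. m c' c * g c) = (\<Sum>c\<in>Cab C f (f c') b. m c' c * g c)"
proof (rule sum.mono_neutral_right[OF Cab_fin[OF fl]])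
  show "Cab C f (f c') b \<subseteq> Cab C f a b" using c' by (auto simp: Cab_def)
  show "\<forall>i\<in>Cab C f a b - Cab C f (f c') b. m c' i * g i = 0"
    using floer_triangular[OF fl c'(1)] by (fastforce simp: Cab_def)
qed

lemma Nov_dd_window:
  assumes fl: "floer_triple C f m" and sC: "\<forall>c. \<gamma> c \<noteq> 0 \<longrightarrow> c \<in> C"
  and bd: "\<forall>c. \<gamma> c \<noteq> 0 \<longrightarrow> f c' \<le> f c \<longrightarrow> f c \<le> b"
  shows "dd (Nov C f m) \<gamma> c' = (if c' \<in> C \<and> f c' \<le> b then \<Sum>c\<in>Cab C f (f c') b. m c' c * \<gamma> c else 0)"
proof -
  define S where "S = {c \<in> C. \<gamma> c \<noteq> 0 \<and> m c' c \<noteq> 0}"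
  have ddN: "dd (Nov C f m) \<gamma> c' = (if c' \<in> C then \<Sum>c\<in>S. m c' c * \<gamma> c else 0)"
    by (simp add: Nov_def S_def)
  show ?thesis
  proof (cases "c' \<in> C")
    case False then show ?thesis using ddN by simp
  next
    case True
    have S: "S \<subseteq> Cab C f (f c') b"
    proof
      fix c assume c: "c \<in> S"
      then have "f c' < f c" using floer_triangular[OF fl True] unfolding S_def by blast
      then show "c \<in> Cab C f (f c') b" using c bd unfolding Cab_def S_def by auto
    qed
    show ?thesis
    proof (cases "f c' \<le> b")
      case True2: True
      have "(\<Sum>c\<in>S. m c' c * \<gamma> c) = (\<Sum>c\<in>Cab C f (f c') b. m c' c * \<gamma> c)"
        by (rule sum.mono_neutral_left[OF Cab_fin[OF fl] S]) (auto simp: Cab_def S_def)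
      then show ?thesis using True True2 ddN by simp
    next
      case False
      have "Cab C f (f c') b = {}" using False by (auto simp: Cab_def)
      then have "S = {}" using S by blast
      then show ?thesis using True False ddN by simp
    qed
  qed
qed

lemma CM_dd_trunc:
  assumes fl: "floer_triple C f m" and sC: "\<forall>c. \<gamma> c \<noteq> 0 \<longrightarrow> c \<in> C"
  and bd: "\<forall>c. \<gamma> c \<noteq> 0 \<longrightarrow> a \<le> f c \<longrightarrow> f c \<le> b"
  shows "dd (CM C f m a b) (trunc f \<gamma> a) = trunc f (dd (Nov C f m) \<gamma>) a"
proof (rule ext)
  fix c'
  show "dd (CM C f m a b) (trunc f \<gamma> a) c' = trunc f (dd (Nov C f m) \<gamma>) a c'"
  proof (cases "a \<le> f c'")
    case False
    then show ?thesis by (simp add: CM_dd trunc_def Cab_def)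
  next
    case True
    have h: "\<forall>c. \<gamma> c \<noteq> 0 \<longrightarrow> f c' \<le> f c \<longrightarrow> f c \<le> b" using bd True by auto
    have cin: "c' \<in> Cab C f a b \<longleftrightarrow> c' \<in> C \<and> f c' \<le> b" using True by (auto simp: Cab_def)
    have "(\<Sum>c\<in>Cab C f a b. m c' c * trunc f \<gamma> a c) = (\<Sum>c\<in>Cab C f a b. m c' c * \<gamma> c)"
      by (rule sum.cong) (auto simp: Cab_def trunc_def)
    also have "\<dots> = (\<Sum>c\<in>Cab C f (f c') b. m c' c * \<gamma> c)" if "c' \<in> C"
      by (rule Cab_sum_from[OF fl that True])
    finally show ?thesis
      using Nov_dd_window[OF fl sC h] True cin by (simp add: CM_dd trunc_def)
  qed
qed

lemma Nov_dd_supp: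
  assumes fl: "floer_triple C f m" and h: "\<forall>c. \<gamma> c \<noteq> 0 \<longrightarrow> c \<in> C \<and> f c \<le> b"
  shows "\<forall>c. dd (Nov C f m) \<gamma> c \<noteq> 0 \<longrightarrow> c \<in> C \<and> f c \<le> b"
proof (intro allI impI)
  fix c' assume nz: "dd (Nov C f m) \<gamma> c' \<noteq> 0"
  have sC: "\<forall>c. \<gamma> c \<noteq> 0 \<longrightarrow> c \<in> C" and bd: "\<forall>c. \<gamma> c \<noteq> 0 \<longrightarrow> f c' \<le> f c \<longrightarrow> f c \<le> b"
    using h by blast+
  show "c' \<in> C \<and> f c' \<le> b" using Nov_dd_window[OF fl sC bd] nz by (auto split: if_splits)
qed

lemma Nov_ad_car:
  assumes "x \<in> car (Nov C f m)" "y \<in> car (Nov C f m)" shows "(\<lambda>c. x c + y c) \<in> car (Nov C f m)"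
proof -
  have "{c. x c + y c \<noteq> 0 \<and> b < f c} \<subseteq> {c. x c \<noteq> 0 \<and> b < f c} \<union> {c. y c \<noteq> 0 \<and> b < f c}" for b
    by auto
  moreover have "finite ({c. x c \<noteq> 0 \<and> b < f c} \<union> {c. y c \<noteq> 0 \<and> b < f c})" for b
    using assms unfolding Nov_car by blast
  ultimately have "finite {c. x c + y c \<noteq> 0 \<and> b < f c}" for b by (rule finite_subset)
  moreover have "\<forall>c. x c + y c \<noteq> 0 \<longrightarrow> c \<in> C" using assms by (force simp: Nov_car)
  ultimately show ?thesis by (simp add: Nov_car)
qed

lemma Nov_sm_car:
  assumes "x \<in> car (Nov C f m)" shows "(\<lambda>c. s * x c) \<in> car (Nov C f m)"
proof -
  have "{c. s * x c \<noteq> 0 \<and> b < f c} \<subseteq> {c. x c \<noteq> 0 \<and> b < f c}" for b by auto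
  then have "finite {c. s * x c \<noteq> 0 \<and> b < f c}" for b
    using assms unfolding Nov_car by (blast intro: finite_subset)
  then show ?thesis using assms by (simp add: Nov_car)
qed

lemma Nov_dd_car:
  assumes fl: "floer_triple C f m" and x: "x \<in> car (Nov C f m)" shows "dd (Nov C f m) x \<in> car (Nov C f m)"
proof -
  have sC: "\<forall>c. x c \<noteq> 0 \<longrightarrow> c \<in> C" using x by (simp add: Nov_car)
  have "finite {c. dd (Nov C f m) x c \<noteq> 0 \<and> b' < f c}" for b'
  proof -
    obtain B where B: "\<forall>c. x c \<noteq> 0 \<longrightarrow> b' \<le> f c \<longrightarrow> f c \<le> B" using Nov_bound[OF x] by blast
    have "{c. dd (Nov C f m) x c \<noteq> 0 \<and> b' < f c} \<subseteq> Cab C f b' B"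
    proof
      fix c' assume c': "c' \<in> {c. dd (Nov C f m) x c \<noteq> 0 \<and> b' < f c}"
      have "\<forall>c. x c \<noteq> 0 \<longrightarrow> f c' \<le> f c \<longrightarrow> f c \<le> B" using B c' by auto
      then show "c' \<in> Cab C f b' B" using Nov_dd_window[OF fl sC] c'
        by (auto simp: Cab_def split: if_splits)
    qed
    then show ?thesis using Cab_fin[OF fl] by (rule finite_subset)
  qed
  then show ?thesis by (simp add: Nov_car Nov_def)
qed

lemma Nov_dd_ad:
  assumes fl: "floer_triple C f m" and x: "x \<in> car (Nov C f m)" and y: "y \<in> car (Nov C f m)"
  shows "dd (Nov C f m) (\<lambda>c. x c + y c) = (\<lambda>c. dd (Nov C f m) x c + dd (Nov C f m) y c)"
proof (rule ext)
  fix c'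
  obtain B1 where B1: "\<forall>c. x c \<noteq> 0 \<longrightarrow> f c' \<le> f c \<longrightarrow> f c \<le> B1" using Nov_bound[OF x] by blast
  obtain B2 where B2: "\<forall>c. y c \<noteq> 0 \<longrightarrow> f c' \<le> f c \<longrightarrow> f c \<le> B2" using Nov_bound[OF y] by blast
  define B where "B = max B1 B2"
  have hx: "\<forall>c. x c \<noteq> 0 \<longrightarrow> f c' \<le> f c \<longrightarrow> f c \<le> B" using B1 B_def by force
  have hy: "\<forall>c. y c \<noteq> 0 \<longrightarrow> f c' \<le> f c \<longrightarrow> f c \<le> B" using B2 B_def by force
  have hxy: "\<forall>c. x c + y c \<noteq> 0 \<longrightarrow> f c' \<le> f c \<longrightarrow> f c \<le> B" using hx hy by force
  have sx: "\<forall>c. x c \<noteq> 0 \<longrightarrow> c \<in> C" and sy: "\<forall>c. y c \<noteq> 0 \<longrightarrow> c \<in> C" using x y by (simp_all add: Nov_car)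
  then have sxy: "\<forall>c. x c + y c \<noteq> 0 \<longrightarrow> c \<in> C" by force
  show "dd (Nov C f m) (\<lambda>c. x c + y c) c' = dd (Nov C f m) x c' + dd (Nov C f m) y c'"
    using Nov_dd_window[OF fl sx hx] Nov_dd_window[OF fl sy hy] Nov_dd_window[OF fl sxy hxy]
    by (simp add: sum.distrib distrib_left)
qed

lemma Nov_dd_sm:
  assumes fl: "floer_triple C f m" and x: "x \<in> car (Nov C f m)"
  shows "dd (Nov C f m) (\<lambda>c. s * x c) = (\<lambda>c. s * dd (Nov C f m) x c)"
proof (rule ext)
  fix c'
  obtain B where B: "\<forall>c. x c \<noteq> 0 \<longrightarrow> f c' \<le> f c \<longrightarrow> f c \<le> B" using Nov_bound[OF x] by blast
  have hs: "\<forall>c. s * x c \<noteq> 0 \<longrightarrow> f c' \<le> f c \<longrightarrow> f c \<le> B" using B by force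
  have sx: "\<forall>c. x c \<noteq> 0 \<longrightarrow> c \<in> C" using x by (simp add: Nov_car)
  then have ss: "\<forall>c. s * x c \<noteq> 0 \<longrightarrow> c \<in> C" by force
  show "dd (Nov C f m) (\<lambda>c. s * x c) c' = s * dd (Nov C f m) x c'"
    using Nov_dd_window[OF fl sx B] Nov_dd_window[OF fl ss hs]
    by (simp add: sum_distrib_left mult.left_commute)
qed

lemma Nov_lin_cx:
  assumes fl: "floer_triple C f m" shows "lin_cx (Nov C f m)"
proof
  let ?N = "Nov C f m"
  show "zr ?N \<in> car ?N" by (simp add: Nov_def)
  show "ad ?N x y \<in> car ?N" if "x \<in> car ?N" "y \<in> car ?N" for x y
    using Nov_ad_car[OF that] by (simp add: Nov_ops)
  show "sm ?N s x \<in> car ?N" if "x \<in> car ?N" for s x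
    using Nov_sm_car[OF that] by (simp add: Nov_ops)
  show "dd ?N x \<in> car ?N" if "x \<in> car ?N" for x
    by (rule Nov_dd_car[OF fl that])
  show "\<exists>y\<in>car ?N. ad ?N x y = zr ?N" if "x \<in> car ?N" for x
    using Nov_sm_car[OF that, of "- 1"] by (intro bexI[of _ "\<lambda>c. - 1 * x c"]) (auto simp: Nov_ops)
  show "dd ?N (ad ?N x y) = ad ?N (dd ?N x) (dd ?N y)" if "x \<in> car ?N" "y \<in> car ?N" for x y
    using Nov_dd_ad[OF fl that] by (simp add: Nov_ops)
  show "dd ?N (sm ?N s x) = sm ?N s (dd ?N x)" if "x \<in> car ?N" for s x
    using Nov_dd_sm[OF fl that] by (simp add: Nov_ops)
qed (simp_all add: Nov_ops algebra_simps)

section \<open>The complex lim_b lim_a CM\<close>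

text \<open>The inverse limit over a at a fixed level b; DI is the directed union of these.\<close>
definition CMinv :: "'c set \<Rightarrow> ('c \<Rightarrow> real) \<Rightarrow> ('c \<Rightarrow> 'c \<Rightarrow> 'k::field) \<Rightarrow> real \<Rightarrow> (real \<Rightarrow> 'c \<Rightarrow> 'k, 'k) cx" where
  "CMinv C f m b = invlim (\<lambda>a. CM C f m a b) (projp f)"

lemma incl_eq: "incl = (\<lambda>_ _ x. x)"
  by (simp add: incl_def fun_eq_iff)

lemma DI_alt: "DI C f m = dirlim (CMinv C f m) (\<lambda>_ _ x. x)"
  by (simp add: DI_def incl_eq CMinv_def[abs_def])

lemma CMinv_car: "x \<in> car (CMinv C f m b) \<longleftrightarrow> (\<forall>a. x a \<in> car (CM C f m a b)) \<and> (\<forall>a1 a2. a1 \<le> a2 \<longrightarrow> projp f a2 a1 (x a1) = x a2)"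
  by (simp add: CMinv_def invlim_def)

lemma CMinv_trunc: "trunc f \<gamma> \<in> car (CMinv C f m b) \<longleftrightarrow> (\<forall>c. \<gamma> c \<noteq> 0 \<longrightarrow> c \<in> C \<and> f c \<le> b)"
  by (auto simp: CMinv_car CM_trunc_car projp_trunc)

lemma CMinv_mono: "b \<le> b' \<Longrightarrow> x \<in> car (CMinv C f m b) \<Longrightarrow> x \<in> car (CMinv C f m b')"
  unfolding CMinv_car using CM_mono by blast

lemma CMinv_ad: "ad (CMinv C f m b) (trunc f \<gamma>) (trunc f \<delta>) = trunc f (\<lambda>c. \<gamma> c + \<delta> c)"
  by (simp add: CMinv_def invlim_def CM_def trunc_def fun_eq_iff)

lemma CMinv_sm: "sm (CMinv C f m b) s (trunc f \<gamma>) = trunc f (\<lambda>c. s * \<gamma> c)"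
  by (simp add: CMinv_def invlim_def CM_def trunc_def fun_eq_iff)

lemma CMinv_dd:
  assumes fl: "floer_triple C f m" and h: "\<forall>c. \<gamma> c \<noteq> 0 \<longrightarrow> c \<in> C \<and> f c \<le> b"
  shows "dd (CMinv C f m b) (trunc f \<gamma>) = trunc f (dd (Nov C f m) \<gamma>)"
proof (rule ext)
  fix a
  have sC: "\<forall>c. \<gamma> c \<noteq> 0 \<longrightarrow> c \<in> C" and bd: "\<forall>c. \<gamma> c \<noteq> 0 \<longrightarrow> a \<le> f c \<longrightarrow> f c \<le> b"
    using h by blast+
  have "dd (CMinv C f m b) (trunc f \<gamma>) a = dd (CM C f m a b) (trunc f \<gamma> a)"
    by (simp add: CMinv_def invlim_def)
  also have "\<dots> = trunc f (dd (Nov C f m) \<gamma>) a" by (rule CM_dd_trunc[OF fl sC bd])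
  finally show "dd (CMinv C f m b) (trunc f \<gamma>) a = trunc f (dd (Nov C f m) \<gamma>) a" .
qed

definition emb_DI :: "'c set \<Rightarrow> ('c \<Rightarrow> real) \<Rightarrow> ('c \<Rightarrow> 'c \<Rightarrow> 'k::field) \<Rightarrow> ('c \<Rightarrow> 'k) \<Rightarrow> (real \<times> (real \<Rightarrow> 'c \<Rightarrow> 'k)) set" where
  "emb_DI C f m \<gamma> = ucls (CMinv C f m) (trunc f \<gamma>)"

lemma Nov_CMinv:
  assumes "\<gamma> \<in> car (Nov C f m)" shows "\<exists>b. trunc f \<gamma> \<in> car (CMinv C f m b)"
  using Nov_bound_above[OF assms] assms by (auto simp: CMinv_trunc Nov_car)

text \<open>Every element of lim_b lim_a CM is the class of a compatible family, hence of a
  truncation family of a Novikov chain.\<close>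
lemma DI_car:
  assumes fl: "floer_triple C f m"
  shows "car (DI C f m) = emb_DI C f m ` car (Nov C f m)"
proof
  show "car (DI C f m) \<subseteq> emb_DI C f m ` car (Nov C f m)"
  proof
    fix X assume "X \<in> car (DI C f m)"
    then obtain b x where X: "X = ucls (CMinv C f m) x" and x: "x \<in> car (CMinv C f m b)"
      unfolding DI_alt dirlim_car by blast
    have "\<exists>\<gamma>\<in>car (Nov C f m). x = trunc f \<gamma>"
      by (rule compatible_family_Nov[OF fl, where B="\<lambda>_. b"]) (use x in \<open>auto simp: CMinv_car\<close>)
    then show "X \<in> emb_DI C f m ` car (Nov C f m)" unfolding X emb_DI_def by blast
  qed
next
  show "emb_DI C f m ` car (Nov C f m) \<subseteq> car (DI C f m)"
    using Nov_CMinv unfolding DI_alt dirlim_car emb_DI_def by blast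
qed

lemma emb_DI_rep:
  assumes "\<gamma> \<in> car (Nov C f m)"
  shows "snd (dl_rep (emb_DI C f m \<gamma>)) = trunc f \<gamma> \<and> trunc f \<gamma> \<in> car (CMinv C f m (fst (dl_rep (emb_DI C f m \<gamma>))))"
proof -
  obtain b where b: "trunc f \<gamma> \<in> car (CMinv C f m b)" using Nov_CMinv[OF assms] by blast
  show ?thesis unfolding emb_DI_def by (rule ucls_rep[where V="CMinv C f m" and b=b, OF b])
qed

lemma nov_DI_emb: "\<gamma> \<in> car (Nov C f m) \<Longrightarrow> nov_DI f (emb_DI C f m \<gamma>) = \<gamma>"
  using emb_DI_rep[of \<gamma> C f m] by (simp add: nov_DI_def trunc_def)

lemma DI_ad:
  assumes "\<gamma> \<in> car (Nov C f m)" "\<delta> \<in> car (Nov C f m)"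
  shows "ad (DI C f m) (emb_DI C f m \<gamma>) (emb_DI C f m \<delta>) = emb_DI C f m (ad (Nov C f m) \<gamma> \<delta>)"
proof -
  obtain b1 where b1: "trunc f \<gamma> \<in> car (CMinv C f m b1)" using Nov_CMinv[OF assms(1)] by blast
  obtain b2 where b2: "trunc f \<delta> \<in> car (CMinv C f m b2)" using Nov_CMinv[OF assms(2)] by blast
  show ?thesis unfolding DI_alt emb_DI_def Nov_ops
  proof (rule dirlim_ad[OF b1 b2 CMinv_mono])
    fix b assume "trunc f \<gamma> \<in> car (CMinv C f m b)" "trunc f \<delta> \<in> car (CMinv C f m b)"
    then have "\<forall>c. \<gamma> c + \<delta> c \<noteq> 0 \<longrightarrow> c \<in> C \<and> f c \<le> b"
      unfolding CMinv_trunc by (metis add.right_neutral)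
    then show "ad (CMinv C f m b) (trunc f \<gamma>) (trunc f \<delta>) = trunc f (\<lambda>c. \<gamma> c + \<delta> c)
        \<and> trunc f (\<lambda>c. \<gamma> c + \<delta> c) \<in> car (CMinv C f m b)"
      by (simp add: CMinv_ad CMinv_trunc)
  qed
qed

lemma DI_sm:
  assumes "\<gamma> \<in> car (Nov C f m)"
  shows "sm (DI C f m) s (emb_DI C f m \<gamma>) = emb_DI C f m (sm (Nov C f m) s \<gamma>)"
proof -
  obtain b1 where b1: "trunc f \<gamma> \<in> car (CMinv C f m b1)" using Nov_CMinv[OF assms(1)] by blast
  show ?thesis unfolding DI_alt emb_DI_def Nov_ops
  proof (rule dirlim_sm[where V="CMinv C f m", OF b1])
    fix b assume "trunc f \<gamma> \<in> car (CMinv C f m b)"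
    then have "\<forall>c. s * \<gamma> c \<noteq> 0 \<longrightarrow> c \<in> C \<and> f c \<le> b" unfolding CMinv_trunc by force
    then show "sm (CMinv C f m b) s (trunc f \<gamma>) = trunc f (\<lambda>c. s * \<gamma> c)
        \<and> trunc f (\<lambda>c. s * \<gamma> c) \<in> car (CMinv C f m b)"
      by (simp add: CMinv_sm CMinv_trunc)
  qed
qed

lemma DI_dd:
  assumes fl: "floer_triple C f m" and g: "\<gamma> \<in> car (Nov C f m)"
  shows "dd (DI C f m) (emb_DI C f m \<gamma>) = emb_DI C f m (dd (Nov C f m) \<gamma>)"
proof -
  obtain b1 where b1: "trunc f \<gamma> \<in> car (CMinv C f m b1)" using Nov_CMinv[OF g] by blast
  show ?thesis unfolding DI_alt emb_DI_def
  proof (rule dirlim_dd[where V="CMinv C f m", OF b1])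
    fix b assume "trunc f \<gamma> \<in> car (CMinv C f m b)"
    then have h: "\<forall>c. \<gamma> c \<noteq> 0 \<longrightarrow> c \<in> C \<and> f c \<le> b" unfolding CMinv_trunc .
    show "dd (CMinv C f m b) (trunc f \<gamma>) = trunc f (dd (Nov C f m) \<gamma>)
        \<and> trunc f (dd (Nov C f m) \<gamma>) \<in> car (CMinv C f m b)"
      using CMinv_dd[OF fl h] Nov_dd_supp[OF fl h] by (simp add: CMinv_trunc)
  qed
qed

lemma DI_zr: "zr (DI C f m) = emb_DI C f m (zr (Nov C f m))"
proof -
  have z: "zr (CMinv C f m 0) = trunc f (\<lambda>c. 0)"
    by (simp add: CMinv_def invlim_def CM_def trunc_def fun_eq_iff)
  then have "zr (CMinv C f m 0) \<in> car (CMinv C f m 0)" by (simp add: CMinv_trunc)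
  then have "zr (dirlim (CMinv C f m) (\<lambda>_ _ x. x)) = ucls (CMinv C f m) (zr (CMinv C f m 0))"
    by (rule dirlim_zr)
  then show ?thesis unfolding DI_alt emb_DI_def using z by (simp add: Nov_ops)
qed

section \<open>The complex lim_a lim_b CM\<close>

definition emb_ID :: "'c set \<Rightarrow> ('c \<Rightarrow> real) \<Rightarrow> ('c \<Rightarrow> 'c \<Rightarrow> 'k::field) \<Rightarrow> ('c \<Rightarrow> 'k) \<Rightarrow> real \<Rightarrow> (real \<times> ('c \<Rightarrow> 'k)) set" where
  "emb_ID C f m \<gamma> = (\<lambda>a. ucls (\<lambda>b. CM C f m a b) (trunc f \<gamma> a))"

lemma ID_car_eq: "car (ID C f m) = {y. (\<forall>a. y a \<in> car (dirlim (\<lambda>b. CM C f m a b) (\<lambda>_ _ x. x))) \<and>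
   (\<forall>a1 a2. a1 \<le> a2 \<longrightarrow> dl_map (\<lambda>b. CM C f m a2 b) incl (\<lambda>b. projp f a2 a1) (y a1) = y a2)}"
  by (simp add: ID_def invlim_def incl_eq)

lemma ID_ops:
  "ad (ID C f m) y z = (\<lambda>a. ad (dirlim (\<lambda>b. CM C f m a b) (\<lambda>_ _ x. x)) (y a) (z a))"
  "sm (ID C f m) s y = (\<lambda>a. sm (dirlim (\<lambda>b. CM C f m a b) (\<lambda>_ _ x. x)) s (y a))"
  "dd (ID C f m) y = (\<lambda>a. dd (dirlim (\<lambda>b. CM C f m a b) (\<lambda>_ _ x. x)) (y a))"
  "zr (ID C f m) = (\<lambda>a. zr (dirlim (\<lambda>b. CM C f m a b) (\<lambda>_ _ x. x)))"
  by (simp_all add: ID_def invlim_def incl_eq)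

lemma dl_map_projp:
  assumes x: "x \<in> car (CM C f m a1 b)"
  shows "dl_map (\<lambda>b. CM C f m a2 b) incl (\<lambda>b. projp f a2 a1) (ucls (\<lambda>b. CM C f m a1 b) x)
       = ucls (\<lambda>b. CM C f m a2 b) (projp f a2 a1 x)"
proof -
  define p where "p = dl_rep (ucls (\<lambda>b. CM C f m a1 b) x)"
  have rx: "snd p = x" "x \<in> car (CM C f m a1 (fst p))"
    using ucls_rep[where V="\<lambda>b. CM C f m a1 b" and b=b, OF x] p_def by auto
  have proj_car: "projp f a2 a1 x \<in> car (CM C f m a2 (fst p))"
    using rx(2) by (simp add: CM_car projp_def)
  show ?thesis unfolding dl_map_def p_def[symmetric] rx(1) incl_eq
    by (rule dl_cls_incl[where V="\<lambda>b. CM C f m a2 b", OF proj_car])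
qed

lemma emb_ID_car:
  assumes g: "\<gamma> \<in> car (Nov C f m)" shows "emb_ID C f m \<gamma> \<in> car (ID C f m)"
proof -
  have "emb_ID C f m \<gamma> a \<in> car (dirlim (\<lambda>b. CM C f m a b) (\<lambda>_ _ x. x))" for a
    using Nov_CM[OF g] unfolding dirlim_car emb_ID_def by blast
  moreover have "dl_map (\<lambda>b. CM C f m a2 b) incl (\<lambda>b. projp f a2 a1) (emb_ID C f m \<gamma> a1)
      = emb_ID C f m \<gamma> a2" if a: "a1 \<le> a2" for a1 a2
  proof -
    obtain b where b: "trunc f \<gamma> a1 \<in> car (CM C f m a1 b)" using Nov_CM[OF g] by blast
    show ?thesis unfolding emb_ID_def dl_map_projp[OF b] projp_trunc[OF a] ..
  qed
  ultimately show ?thesis unfolding ID_car_eq by blast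
qed

lemma ID_components:
  assumes y: "y \<in> car (ID C f m)"
  defines "x \<equiv> \<lambda>a. snd (dl_rep (y a))" and "B \<equiv> \<lambda>a. fst (dl_rep (y a))"
  shows "y a = ucls (\<lambda>b. CM C f m a b) (x a)" and "x a \<in> car (CM C f m a (B a))"
    and "a1 \<le> a2 \<Longrightarrow> projp f a2 a1 (x a1) = x a2"
proof -
  have ya: "y a = ucls (\<lambda>b. CM C f m a b) (x a) \<and> x a \<in> car (CM C f m a (B a))" for a
  proof -
    have "y a \<in> car (dirlim (\<lambda>b. CM C f m a b) (\<lambda>_ _ x. x))" using y unfolding ID_car_eq by blast
    then obtain b x' where bx: "y a = ucls (\<lambda>b. CM C f m a b) x'" "x' \<in> car (CM C f m a b)"
      unfolding dirlim_car by blast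
    then show ?thesis using ucls_rep[where V="\<lambda>b. CM C f m a b", OF bx(2)] unfolding x_def B_def by simp
  qed
  then show "y a = ucls (\<lambda>b. CM C f m a b) (x a)" and "x a \<in> car (CM C f m a (B a))" by simp_all
  assume a: "a1 \<le> a2"
  have "dl_map (\<lambda>b. CM C f m a2 b) incl (\<lambda>b. projp f a2 a1) (y a1) = y a2"
    using y a unfolding ID_car_eq by blast
  then have "ucls (\<lambda>b. CM C f m a2 b) (projp f a2 a1 (x a1)) = ucls (\<lambda>b. CM C f m a2 b) (x a2)"
    using ya[of a1] ya[of a2] dl_map_projp by metis
  moreover have "projp f a2 a1 (x a1) \<in> car (CM C f m a2 (B a1))"
    using ya[of a1] by (simp add: CM_car projp_def)
  ultimately show "projp f a2 a1 (x a1) = x a2" using ucls_inj by metis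
qed

lemma ID_car:
  assumes fl: "floer_triple C f m"
  shows "car (ID C f m) = emb_ID C f m ` car (Nov C f m)"
proof
  show "car (ID C f m) \<subseteq> emb_ID C f m ` car (Nov C f m)"
  proof
    fix y assume y: "y \<in> car (ID C f m)"
    define x where "x = (\<lambda>a. snd (dl_rep (y a)))"
    obtain \<gamma> where "\<gamma> \<in> car (Nov C f m)" "x = trunc f \<gamma>"
      using compatible_family_Nov[OF fl ID_components(2,3)[OF y]] unfolding x_def by blast
    moreover have "y = (\<lambda>a. ucls (\<lambda>b. CM C f m a b) (x a))"
      using ID_components(1)[OF y] unfolding x_def by blast
    ultimately show "y \<in> emb_ID C f m ` car (Nov C f m)" unfolding emb_ID_def by blast
  qed
qed (use emb_ID_car in blast)

lemma nov_ID_emb: "\<gamma> \<in> car (Nov C f m) \<Longrightarrow> nov_ID f (emb_ID C f m \<gamma>) = \<gamma>"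
proof (rule ext)
  fix c assume g: "\<gamma> \<in> car (Nov C f m)"
  obtain b where b: "trunc f \<gamma> (f c) \<in> car (CM C f m (f c) b)" using Nov_CM[OF g] by blast
  show "nov_ID f (emb_ID C f m \<gamma>) c = \<gamma> c"
    using ucls_rep[where V="\<lambda>b. CM C f m (f c) b", OF b] by (simp add: nov_ID_def emb_ID_def trunc_def)
qed

lemma ID_ad:
  assumes g: "\<gamma> \<in> car (Nov C f m)" and d: "\<delta> \<in> car (Nov C f m)"
  shows "ad (ID C f m) (emb_ID C f m \<gamma>) (emb_ID C f m \<delta>) = emb_ID C f m (ad (Nov C f m) \<gamma> \<delta>)"
proof (rule ext)
  fix a
  obtain b1 where b1: "trunc f \<gamma> a \<in> car (CM C f m a b1)" using Nov_CM[OF g] by blast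
  obtain b2 where b2: "trunc f \<delta> a \<in> car (CM C f m a b2)" using Nov_CM[OF d] by blast
  show "ad (ID C f m) (emb_ID C f m \<gamma>) (emb_ID C f m \<delta>) a = emb_ID C f m (ad (Nov C f m) \<gamma> \<delta>) a"
    unfolding ID_ops emb_ID_def Nov_ops
  proof (rule dirlim_ad[OF b1 b2 CM_mono])
    fix b assume "trunc f \<gamma> a \<in> car (CM C f m a b)" "trunc f \<delta> a \<in> car (CM C f m a b)"
    then have "trunc f (\<lambda>c. \<gamma> c + \<delta> c) a \<in> car (CM C f m a b)"
      unfolding CM_trunc_car by (metis add.right_neutral)
    then show "ad (CM C f m a b) (trunc f \<gamma> a) (trunc f \<delta> a) = trunc f (\<lambda>c. \<gamma> c + \<delta> c) a
        \<and> trunc f (\<lambda>c. \<gamma> c + \<delta> c) a \<in> car (CM C f m a b)"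
      by (simp add: CM_def trunc_def fun_eq_iff)
  qed
qed

lemma ID_sm:
  assumes g: "\<gamma> \<in> car (Nov C f m)"
  shows "sm (ID C f m) s (emb_ID C f m \<gamma>) = emb_ID C f m (sm (Nov C f m) s \<gamma>)"
proof (rule ext)
  fix a
  obtain b1 where b1: "trunc f \<gamma> a \<in> car (CM C f m a b1)" using Nov_CM[OF g] by blast
  show "sm (ID C f m) s (emb_ID C f m \<gamma>) a = emb_ID C f m (sm (Nov C f m) s \<gamma>) a"
    unfolding ID_ops emb_ID_def Nov_ops
  proof (rule dirlim_sm[where V="\<lambda>b. CM C f m a b", OF b1])
    fix b assume "trunc f \<gamma> a \<in> car (CM C f m a b)"
    then have "trunc f (\<lambda>c. s * \<gamma> c) a \<in> car (CM C f m a b)"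
      unfolding CM_trunc_car by force
    then show "sm (CM C f m a b) s (trunc f \<gamma> a) = trunc f (\<lambda>c. s * \<gamma> c) a
        \<and> trunc f (\<lambda>c. s * \<gamma> c) a \<in> car (CM C f m a b)"
      by (simp add: CM_def trunc_def fun_eq_iff)
  qed
qed

lemma ID_dd:
  assumes fl: "floer_triple C f m" and g: "\<gamma> \<in> car (Nov C f m)"
  shows "dd (ID C f m) (emb_ID C f m \<gamma>) = emb_ID C f m (dd (Nov C f m) \<gamma>)"
proof (rule ext)
  fix a
  obtain b1 where b1: "trunc f \<gamma> a \<in> car (CM C f m a b1)" using Nov_CM[OF g] by blast
  have sC: "\<forall>c. \<gamma> c \<noteq> 0 \<longrightarrow> c \<in> C" using g by (simp add: Nov_car)
  show "dd (ID C f m) (emb_ID C f m \<gamma>) a = emb_ID C f m (dd (Nov C f m) \<gamma>) a"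
    unfolding ID_ops emb_ID_def
  proof (rule dirlim_dd[where V="\<lambda>b. CM C f m a b", OF b1])
    fix b assume "trunc f \<gamma> a \<in> car (CM C f m a b)"
    then have bd: "\<forall>c. \<gamma> c \<noteq> 0 \<longrightarrow> a \<le> f c \<longrightarrow> f c \<le> b" unfolding CM_trunc_car by blast
    show "dd (CM C f m a b) (trunc f \<gamma> a) = trunc f (dd (Nov C f m) \<gamma>) a
        \<and> trunc f (dd (Nov C f m) \<gamma>) a \<in> car (CM C f m a b)"
      using CM_dd_trunc[OF fl sC bd] CM_dd_car[of C f m a b "trunc f \<gamma> a"] by simp
  qed
qed

lemma ID_zr: "zr (ID C f m) = emb_ID C f m (zr (Nov C f m))"
proof (rule ext)
  fix a
  have z: "zr (CM C f m a 0) = (\<lambda>c. 0)" by (simp add: CM_def)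
  then have "zr (CM C f m a 0) \<in> car (CM C f m a 0)" by (simp add: CM_car)
  then have "zr (dirlim (\<lambda>b. CM C f m a b) (\<lambda>_ _ x. x)) = ucls (\<lambda>b. CM C f m a b) (zr (CM C f m a 0))"
    by (rule dirlim_zr)
  then show "zr (ID C f m) a = emb_ID C f m (zr (Nov C f m)) a"
    unfolding ID_ops emb_ID_def using z by (simp add: Nov_ops trunc_zero)
qed

section \<open>The comparison map and the main theorem\<close>

text \<open>Under the embeddings, the canonical map k is the identity of the Novikov complex.\<close>
lemma kmap_emb:
  assumes g: "\<gamma> \<in> car (Nov C f m)"
  shows "kmap C f m (emb_DI C f m \<gamma>) = emb_ID C f m \<gamma>"
proof (rule ext)
  fix a
  have r: "snd (dl_rep (emb_DI C f m \<gamma>)) = trunc f \<gamma>"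
    "trunc f \<gamma> \<in> car (CMinv C f m (fst (dl_rep (emb_DI C f m \<gamma>))))"
    using emb_DI_rep[OF g] by auto
  have "trunc f \<gamma> a \<in> car (CM C f m a (fst (dl_rep (emb_DI C f m \<gamma>))))" using r(2) by (simp add: CMinv_car)
  then show "kmap C f m (emb_DI C f m \<gamma>) a = emb_ID C f m \<gamma> a"
    unfolding kmap_def emb_ID_def r(1) incl_eq by (rule dl_cls_incl)
qed

lemma DI_param:
  assumes "floer_triple C f m"
  shows "cx_param (Nov C f m) (DI C f m) (emb_DI C f m)"
  unfolding cx_param_def
proof (intro conjI ballI allI)
  show "car (DI C f m) = emb_DI C f m ` car (Nov C f m)" by (rule DI_car[OF assms])
qed (simp_all add: DI_ad DI_sm DI_dd[OF assms])

lemma ID_param: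
  assumes "floer_triple C f m"
  shows "cx_param (Nov C f m) (ID C f m) (emb_ID C f m)"
  unfolding cx_param_def
proof (intro conjI ballI allI)
  show "car (ID C f m) = emb_ID C f m ` car (Nov C f m)" by (rule ID_car[OF assms])
qed (simp_all add: ID_ad ID_sm ID_dd[OF assms])

theorem mainTheorem7:
  fixes C :: "'c set" and f :: "'c \<Rightarrow> real" and m :: "'c \<Rightarrow> 'c \<Rightarrow> 'k::field"
  assumes "floer_triple C f m"
  shows "chain_iso (DI C f m) (Nov C f m) (nov_DI f)
       \<and> chain_iso (ID C f m) (Nov C f m) (nov_ID f)
       \<and> chain_iso (DI C f m) (ID C f m) (kmap C f m)
       \<and> lin_iso (hom (DI C f m)) (hom (ID C f m)) (hmap (DI C f m) (ID C f m) (kmap C f m))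
       \<and> (\<exists>\<psi>. lin_iso (hom (DI C f m)) (hom (Nov C f m)) \<psi>)
       \<and> (\<exists>\<psi>. lin_iso (hom (ID C f m)) (hom (Nov C f m)) \<psi>)"
proof -
  let ?N = "Nov C f m"
  have N: "lin_cx ?N" by (rule Nov_lin_cx[OF assms])
  have pD: "cx_param ?N (DI C f m) (emb_DI C f m)" by (rule DI_param[OF assms])
  have pI: "cx_param ?N (ID C f m) (emb_ID C f m)" by (rule ID_param[OF assms])
  have DI: "lin_cx (DI C f m)" by (rule lin_cx_param[OF N pD]) (rule DI_zr)
  have ID: "lin_cx (ID C f m)" by (rule lin_cx_param[OF N pI]) (rule ID_zr)
  have inj_ID: "inj_on (emb_ID C f m) (car ?N)"
    by (rule inj_on_inverseI[where g="nov_ID f"]) (rule nov_ID_emb)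
  have DI_Nov: "chain_iso (DI C f m) ?N (nov_DI f)"
    by (rule chain_iso_param[OF N pD cx_param_id inj_on_id]) (simp add: nov_DI_emb)
  have ID_Nov: "chain_iso (ID C f m) ?N (nov_ID f)"
    by (rule chain_iso_param[OF N pI cx_param_id inj_on_id]) (simp add: nov_ID_emb)
  have k: "chain_iso (DI C f m) (ID C f m) (kmap C f m)"
    by (rule chain_iso_param[OF N pD pI inj_ID]) (rule kmap_emb)
  show ?thesis
    using DI_Nov ID_Nov k chain_iso_hom[OF DI ID k]
      chain_iso_hom[OF DI N DI_Nov] chain_iso_hom[OF ID N ID_Nov] by (intro conjI exI)
qed

end
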